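(* For all level expressions $l_1, l_2$: $l_1 \simeq l_2$ if and only if $[\![ l_1 ]\!]_\sigma = [\![ l_2 ]\!]_\sigma$ for every function $\sigma : \mathcal{I} \to \mathbb{N}$.
   Context: Level expressions are generated by the grammar $l ::= i \mid \mathtt{z} \mid \mathtt{s}\,l \mid l \sqcup l'$, where $i$ ranges over an infinite set $\mathcal{I}$ of level variables. The relation $\simeq$ is the smallest congruence on level expressions (reflexive, symmetric, transitive, closed under the constructors $\mathtt{s}$ and $\sqcup$, and closed under substitution of level expressions for level variables) containing the equations $i_1 \sqcup (i_2 \sqcup i_3) \approx (i_1 \sqcup i_2) \sqcup i_3$, $i_1 \sqcup i_2 \approx i_2 \sqcup i_1$, $\mathtt{s}\,(i_1 \sqcup i_2) \approx \mathtt{s}\,i_1 \sqcup \mathtt{s}\,i_2$, $i \sqcup \mathtt{s}\,i \approx \mathtt{s}\,i$, $i \sqcup \mathtt{z} \approx i$, $i \sqcup i \approx i$ (for level variables $i, i_1, i_2, i_3$). Given $\sigma : \mathcal{I} \to \mathbb{N}$, the interpretation $[\![ l ]\!]_\sigma \in \mathbb{N}$ is defined by $[\![ i ]\!]_\sigma = \sigma(i)$, $[\![ \mathtt{z} ]\!]_\sigma = 0$, $[\![ \mathtt{s}\,l ]\!]_\sigma = [\![ l ]\!]_\sigma + 1$, $[\![ l \sqcup l' ]\!]_\sigma = \max([\![ l ]\!]_\sigma, [\![ l' ]\!]_\sigma)$. *)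

theory Defs
  imports Main
begin

datatype 'i lvl = Var 'i | Z | S "'i lvl" | Max "'i lvl" "'i lvl"

primrec lsubst :: "('i \<Rightarrow> 'i lvl) \<Rightarrow> 'i lvl \<Rightarrow> 'i lvl" where
  "lsubst f (Var i) = f i"
| "lsubst f Z = Z"
| "lsubst f (S l) = S (lsubst f l)"
| "lsubst f (Max l l') = Max (lsubst f l) (lsubst f l')"

primrec interp :: "('i \<Rightarrow> nat) \<Rightarrow> 'i lvl \<Rightarrow> nat" where
  "interp \<sigma> (Var i) = \<sigma> i"
| "interp \<sigma> Z = 0"
| "interp \<sigma> (S l) = interp \<sigma> l + 1"
| "interp \<sigma> (Max l l') = max (interp \<sigma> l) (interp \<sigma> l')"

inductive lax :: "'i lvl \<Rightarrow> 'i lvl \<Rightarrow> bool" where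
  assoc: "lax (Max (Var i1) (Max (Var i2) (Var i3))) (Max (Max (Var i1) (Var i2)) (Var i3))"
| comm: "lax (Max (Var i1) (Var i2)) (Max (Var i2) (Var i1))"
| sdist: "lax (S (Max (Var i1) (Var i2))) (Max (S (Var i1)) (S (Var i2)))"
| subsume: "lax (Max (Var i) (S (Var i))) (S (Var i))"
| zero: "lax (Max (Var i) Z) (Var i)"
| idem: "lax (Max (Var i) (Var i)) (Var i)"

inductive leq :: "'i lvl \<Rightarrow> 'i lvl \<Rightarrow> bool" where
  ax: "lax l r \<Longrightarrow> leq l r"
| refl: "leq l l"
| sym: "leq l r \<Longrightarrow> leq r l"
| trans: "leq l m \<Longrightarrow> leq m r \<Longrightarrow> leq l r"
| congS: "leq l r \<Longrightarrow> leq (S l) (S r)"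
| congMax: "leq l r \<Longrightarrow> leq l' r' \<Longrightarrow> leq (Max l l') (Max r r')"
| subst: "leq l r \<Longrightarrow> leq (lsubst f l) (lsubst f r)"

end

theory Submission
  imports Defs
begin

text \<open>Soundness is a rule induction. For completeness, every level is provably equal to a maximum
  of atoms \<open>S\<^sup>k i\<close> and \<open>S\<^sup>k z\<close>. If two such normal forms have the same interpretation,
  then every atom of one is dominated by an atom of the other, i.e. one with at least the same
  offset and, for \<open>S\<^sup>k i\<close>, on the same variable \<open>i\<close>: test with the valuation that is huge
  at \<open>i\<close> and \<open>0\<close> elsewhere. Dominated atoms are absorbed by the equations, so each normal form
  is provably equal to the maximum of both. The equations are stated for variables only, so their
  instances at arbitrary levels are obtained by substitution into three distinct variables; this
  is what the infinitude of \<open>\<I>\<close> provides.\<close>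

lemma interp_lsubst: "interp \<sigma> (lsubst f l) = interp (\<lambda>i. interp \<sigma> (f i)) l"
  by (induction l) auto

lemma interp_funpow_S: "interp \<sigma> ((S ^^ k) l) = interp \<sigma> l + k"
  by (induction k) auto

lemma leq_sound: "leq l r \<Longrightarrow> interp \<sigma> l = interp \<sigma> r"
proof (induction arbitrary: \<sigma> rule: leq.induct)
  case (ax l r)
  then show ?case by (induction rule: lax.induct) auto
next
  case (subst l r f)
  then show ?case by (simp add: interp_lsubst)
qed auto

lemmas [trans] = leq.trans

lemma leq_funpow_S_cong: "leq l r \<Longrightarrow> leq ((S ^^ k) l) ((S ^^ k) r)"
  by (induction k) (auto intro: leq.congS)

locale three_variables =
  fixes x y z :: 'i
  assumes distinct_xyz: "distinct [x, y, z]"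
begin

definition inst :: "'i lvl \<Rightarrow> 'i lvl \<Rightarrow> 'i lvl \<Rightarrow> 'i \<Rightarrow> 'i lvl" where
  "inst a b c = (\<lambda>j. if j = x then a else if j = y then b else c)"

lemma inst_simps [simp]: "inst a b c x = a" "inst a b c y = b" "inst a b c z = c"
  using distinct_xyz by (auto simp: inst_def)

lemma leq_max_assoc: "leq (Max (a :: 'i lvl) (Max b c)) (Max (Max a b) c)"
  using leq.subst[OF leq.ax[OF lax.assoc[of x y z]], of "inst a b c"] by simp

lemma leq_max_comm: "leq (Max (a :: 'i lvl) b) (Max b a)"
  using leq.subst[OF leq.ax[OF lax.comm[of x y]], of "inst a b a"] by simp

lemma leq_S_max: "leq (S (Max (a :: 'i lvl) b)) (Max (S a) (S b))"
  using leq.subst[OF leq.ax[OF lax.sdist[of x y]], of "inst a b a"] by simp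

lemma leq_max_S: "leq (Max (a :: 'i lvl) (S a)) (S a)"
  using leq.subst[OF leq.ax[OF lax.subsume[of x]], of "inst a a a"] by simp

lemma leq_max_Z: "leq (Max (a :: 'i lvl) Z) a"
  using leq.subst[OF leq.ax[OF lax.zero[of x]], of "inst a a a"] by simp

lemma leq_max_idem: "leq (Max (a :: 'i lvl) a) a"
  using leq.subst[OF leq.ax[OF lax.idem[of x]], of "inst a a a"] by simp

lemma leq_Z_max: "leq (Max Z (a :: 'i lvl)) a"
  using leq.trans[OF leq_max_comm leq_max_Z] .

lemma leq_funpow_S_max: "leq ((S ^^ k) (Max (a :: 'i lvl) b)) (Max ((S ^^ k) a) ((S ^^ k) b))"
proof (induction k)
  case 0
  show ?case by (simp add: leq.refl)
next
  case (Suc k)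
  show ?case using leq.trans[OF leq.congS[OF Suc] leq_S_max] by simp
qed

lemma leq_max_funpow_S: "leq (Max (a :: 'i lvl) ((S ^^ d) a)) ((S ^^ d) a)"
proof (induction d)
  case 0
  show ?case by (simp add: leq_max_idem)
next
  case (Suc d)
  let ?A = "(S ^^ d) a"
  have "leq (Max a (S ?A)) (Max a (Max ?A (S ?A)))"
    by (rule leq.congMax[OF leq.refl leq.sym[OF leq_max_S]])
  also have "leq \<dots> (Max (Max a ?A) (S ?A))" by (rule leq_max_assoc)
  also have "leq \<dots> (Max ?A (S ?A))" by (rule leq.congMax[OF Suc leq.refl])
  also have "leq \<dots> (S ?A)" by (rule leq_max_S)
  finally show ?case by simp
qed

lemma leq_max_funpow_S_shift:
  assumes "leq (Max (a :: 'i lvl) ((S ^^ d) b)) ((S ^^ d) b)"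
  shows "leq (Max ((S ^^ (k + d)) b) ((S ^^ k) a)) ((S ^^ (k + d)) b)"
proof -
  have "leq (Max ((S ^^ (k + d)) b) ((S ^^ k) a)) (Max ((S ^^ k) a) ((S ^^ k) ((S ^^ d) b)))"
    by (simp add: leq_max_comm funpow_add)
  also have "leq \<dots> ((S ^^ k) (Max a ((S ^^ d) b)))" by (rule leq.sym[OF leq_funpow_S_max])
  also have "leq \<dots> ((S ^^ k) ((S ^^ d) b))" by (rule leq_funpow_S_cong[OF assms])
  finally show ?thesis by (simp add: funpow_add)
qed

end

text \<open>An atom \<open>(k, None)\<close> stands for \<open>S\<^sup>k z\<close> and \<open>(k, Some i)\<close> for \<open>S\<^sup>k i\<close>.\<close>

type_synonym 'i atom = "nat \<times> 'i option"

definition atom_lvl :: "'i atom \<Rightarrow> 'i lvl" where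
  "atom_lvl a = (S ^^ fst a) (case snd a of None \<Rightarrow> Z | Some i \<Rightarrow> Var i)"

fun max_list :: "'i atom list \<Rightarrow> 'i lvl" where
  "max_list [] = Z"
| "max_list [a] = atom_lvl a"
| "max_list (a # as) = Max (atom_lvl a) (max_list as)"

fun atoms :: "'i lvl \<Rightarrow> 'i atom list" where
  "atoms (Var i) = [(0, Some i)]"
| "atoms Z = [(0, None)]"
| "atoms (S l) = map (\<lambda>(k, v). (Suc k, v)) (atoms l)"
| "atoms (Max a b) = atoms a @ atoms b"

fun atom_le :: "'i atom \<Rightarrow> 'i atom \<Rightarrow> bool" where
  "atom_le (k, None) (m, _) \<longleftrightarrow> k \<le> m"
| "atom_le (k, Some i) (m, v) \<longleftrightarrow> v = Some i \<and> k \<le> m"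

lemma atoms_nonempty: "atoms l \<noteq> []"
  by (induction l) auto

lemma interp_atom_lvl [simp]:
  "interp \<sigma> (atom_lvl (k, v)) = k + (case v of None \<Rightarrow> 0 | Some i \<Rightarrow> \<sigma> i)"
  by (auto simp: atom_lvl_def interp_funpow_S split: option.splits)

lemma interp_atom_le_max_list: "a \<in> set as \<Longrightarrow> interp \<sigma> (atom_lvl a) \<le> interp \<sigma> (max_list as)"
  by (induction as rule: max_list.induct) auto

lemma interp_max_list_attained:
  "as \<noteq> [] \<Longrightarrow> \<exists>b\<in>set as. interp \<sigma> (max_list as) = interp \<sigma> (atom_lvl b)"
  by (induction as rule: max_list.induct) (auto simp: max_def)

lemma atom_le_Z_if_interp_le:
  assumes "bs \<noteq> []" and "interp (\<lambda>_. 0) (atom_lvl (k, None)) \<le> interp (\<lambda>_. 0) (max_list bs)"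
  shows "\<exists>b\<in>set bs. atom_le (k, None) b"
proof -
  obtain m w where "(m, w) \<in> set bs" and "interp (\<lambda>_. 0) (max_list bs) = m"
    using interp_max_list_attained[OF assms(1), of "\<lambda>_. 0"] by (fastforce split: option.splits)
  with assms(2) show ?thesis by force
qed

lemma atom_le_Var_if_interp_le:
  assumes "bs \<noteq> []" and le: "\<forall>\<sigma>. interp \<sigma> (atom_lvl (k, Some i)) \<le> interp \<sigma> (max_list bs)"
  shows "\<exists>b\<in>set bs. atom_le (k, Some i) b"
proof -
  define N where "N = k + sum_list (map fst bs) + 1"
  define \<sigma> where "\<sigma> = (\<lambda>j. if j = i then N else 0)"
  obtain m w where b: "(m, w) \<in> set bs" and attained: "interp \<sigma> (max_list bs) = interp \<sigma> (atom_lvl (m, w))"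
    using interp_max_list_attained[OF assms(1)] by fastforce
  have ge: "k + N \<le> interp \<sigma> (atom_lvl (m, w))"
    using le[rule_format, of \<sigma>] attained by (simp add: \<sigma>_def)
  have "m \<le> sum_list (map fst bs)"
    using member_le_sum_list[of m "map fst bs"] b by force
  with ge have "w = Some i"
    by (auto simp: \<sigma>_def N_def split: option.splits if_splits)
  with ge b show ?thesis by (force simp: \<sigma>_def)
qed

lemma atom_le_if_interp_le:
  assumes "bs \<noteq> []" and "\<forall>\<sigma>. interp \<sigma> (atom_lvl a) \<le> interp \<sigma> (max_list bs)"
  shows "\<exists>b\<in>set bs. atom_le a b"
proof -
  obtain k v where a: "a = (k, v)" by fastforce
  show ?thesis
  proof (cases v)
    case None
    then show ?thesis
      using atom_le_Z_if_interp_le[OF assms(1)] assms(2)[rule_format, of "\<lambda>_. 0"] a by simp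
  next
    case (Some i)
    then show ?thesis using atom_le_Var_if_interp_le[OF assms(1)] assms(2) a by simp
  qed
qed

context three_variables
begin

lemma leq_max_list_append:
  fixes as bs :: "'i atom list"
  shows "as \<noteq> [] \<Longrightarrow> bs \<noteq> [] \<Longrightarrow> leq (max_list (as @ bs)) (Max (max_list as) (max_list bs))"
proof (induction as rule: max_list.induct)
  case (2 a)
  then show ?case by (cases bs) (auto intro: leq.refl)
next
  case (3 a a' as)
  have "leq (max_list ((a # a' # as) @ bs)) (Max (atom_lvl a) (Max (max_list (a' # as)) (max_list bs)))"
    using 3 by (auto intro: leq.congMax leq.refl)
  also have "leq \<dots> (Max (max_list (a # a' # as)) (max_list bs))" by (simp add: leq_max_assoc)
  finally show ?case .
qed simp

lemma leq_max_list_shift: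
  fixes as :: "'i atom list"
  shows "as \<noteq> [] \<Longrightarrow> leq (max_list (map (\<lambda>(k, v). (Suc k, v)) as)) (S (max_list as))"
proof (induction as rule: max_list.induct)
  case (2 a)
  then show ?case by (cases a) (auto simp: atom_lvl_def intro: leq.refl)
next
  case (3 a a' as)
  have "leq (max_list (map (\<lambda>(k, v). (Suc k, v)) (a # a' # as)))
      (Max (S (atom_lvl a)) (S (max_list (a' # as))))"
    using 3 by (cases a) (auto simp: atom_lvl_def intro!: leq.congMax leq.refl)
  also have "leq \<dots> (S (max_list (a # a' # as)))" by (simp add: leq.sym[OF leq_S_max])
  finally show ?case .
qed simp

lemma leq_max_list_atoms: "leq (l :: 'i lvl) (max_list (atoms l))"
proof (induction l)
  case (S l)
  have "leq (S l) (S (max_list (atoms l)))" using S by (rule leq.congS)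
  also have "leq \<dots> (max_list (atoms (S l)))"
    by (simp add: leq.sym[OF leq_max_list_shift[OF atoms_nonempty]])
  finally show ?case .
next
  case (Max a b)
  have "leq (Max a b) (Max (max_list (atoms a)) (max_list (atoms b)))"
    using Max by (rule leq.congMax)
  also have "leq \<dots> (max_list (atoms (Max a b)))"
    by (simp add: leq.sym[OF leq_max_list_append[OF atoms_nonempty atoms_nonempty]])
  finally show ?case .
qed (auto simp: atom_lvl_def intro: leq.refl)

lemma leq_max_atom_lvl:
  fixes a b :: "'i atom"
  shows "atom_le a b \<Longrightarrow> leq (Max (atom_lvl b) (atom_lvl a)) (atom_lvl b)"
proof (induction a b rule: atom_le.induct)
  case (1 k m v)
  then obtain d where "m = k + d" using le_Suc_ex by auto
  then show ?case
    using leq_max_funpow_S_shift[OF leq_Z_max[of "(S ^^ d) (case v of None \<Rightarrow> Z | Some i \<Rightarrow> Var i)"], of k]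
    by (simp add: atom_lvl_def)
next
  case (2 k i m v)
  then obtain d where "m = k + d" and "v = Some i" using le_Suc_ex by auto
  then show ?case
    using leq_max_funpow_S_shift[OF leq_max_funpow_S[of "Var i" d], of k]
    by (simp add: atom_lvl_def)
qed

lemma leq_max_list_absorb_atom:
  fixes bs :: "'i atom list"
  shows "\<exists>b\<in>set bs. atom_le a b \<Longrightarrow> leq (Max (max_list bs) (atom_lvl a)) (max_list bs)"
proof (induction bs rule: max_list.induct)
  case (2 b)
  then show ?case by (auto intro: leq_max_atom_lvl)
next
  case (3 b b' bs)
  let ?R = "max_list (b' # bs)"
  have reassoc: "leq (Max (max_list (b # b' # bs)) (atom_lvl a)) (Max (atom_lvl b) (Max ?R (atom_lvl a)))"
    by (simp add: leq.sym[OF leq_max_assoc])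
  show ?case
  proof (cases "atom_le a b")
    case True
    note reassoc
    also have "leq (Max (atom_lvl b) (Max ?R (atom_lvl a))) (Max (atom_lvl b) (Max (atom_lvl a) ?R))"
      by (rule leq.congMax[OF leq.refl leq_max_comm])
    also have "leq \<dots> (Max (Max (atom_lvl b) (atom_lvl a)) ?R)" by (rule leq_max_assoc)
    also have "leq \<dots> (Max (atom_lvl b) ?R)" by (rule leq.congMax[OF leq_max_atom_lvl[OF True] leq.refl])
    finally show ?thesis by simp
  next
    case False
    with 3 have "leq (Max ?R (atom_lvl a)) ?R" by auto
    with reassoc show ?thesis by (simp add: leq.trans[OF _ leq.congMax[OF leq.refl]])
  qed
qed simp

lemma leq_max_list_absorb:
  fixes as bs :: "'i atom list"
  shows "as \<noteq> [] \<Longrightarrow> \<forall>a\<in>set as. \<exists>b\<in>set bs. atom_le a b \<Longrightarrow>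
    leq (Max (max_list bs) (max_list as)) (max_list bs)"
proof (induction as rule: max_list.induct)
  case (2 a)
  then show ?case by (simp add: leq_max_list_absorb_atom)
next
  case (3 a a' as)
  let ?L = "max_list bs" and ?R = "max_list (a' # as)"
  have "leq (Max ?L (max_list (a # a' # as))) (Max (Max ?L (atom_lvl a)) ?R)"
    by (simp add: leq_max_assoc)
  also have "leq \<dots> (Max ?L ?R)"
    using 3 by (auto intro!: leq.congMax leq_max_list_absorb_atom leq.refl)
  also have "leq \<dots> ?L" using 3 by auto
  finally show ?case .
qed simp

lemma atoms_dominated:
  fixes l r :: "'i lvl"
  assumes "\<forall>\<sigma>. interp \<sigma> l = interp \<sigma> r"
  shows "\<forall>a\<in>set (atoms l). \<exists>b\<in>set (atoms r). atom_le a b"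
proof
  fix a assume "a \<in> set (atoms l)"
  then have "interp \<sigma> (atom_lvl a) \<le> interp \<sigma> (max_list (atoms r))" for \<sigma>
    using interp_atom_le_max_list[of a "atoms l" \<sigma>] assms
      leq_sound[OF leq_max_list_atoms, where \<sigma> = \<sigma>]
    by simp
  then show "\<exists>b\<in>set (atoms r). atom_le a b"
    by (simp add: atom_le_if_interp_le atoms_nonempty)
qed

lemma leq_complete:
  fixes l r :: "'i lvl"
  assumes eq: "\<forall>\<sigma>. interp \<sigma> l = interp \<sigma> r"
  shows "leq l r"
proof -
  have eq': "\<forall>\<sigma>. interp \<sigma> r = interp \<sigma> l" using eq by simp
  let ?L = "max_list (atoms l)" and ?R = "max_list (atoms r)"
  have "leq l ?L" by (rule leq_max_list_atoms)
  also have "leq \<dots> (Max ?L ?R)"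
    by (rule leq.sym[OF leq_max_list_absorb[OF atoms_nonempty atoms_dominated[OF eq']]])
  also have "leq \<dots> (Max ?R ?L)" by (rule leq_max_comm)
  also have "leq \<dots> ?R"
    by (rule leq_max_list_absorb[OF atoms_nonempty atoms_dominated[OF eq]])
  also have "leq \<dots> r" by (rule leq.sym[OF leq_max_list_atoms])
  finally show ?thesis .
qed

end

theorem mainTheorem1:
  fixes l1 l2 :: "'i lvl"
  assumes "infinite (UNIV :: 'i set)"
  shows "leq l1 l2 \<longleftrightarrow> (\<forall>\<sigma> :: 'i \<Rightarrow> nat. interp \<sigma> l1 = interp \<sigma> l2)"
proof -
  obtain x y z :: 'i where "distinct [x, y, z]"
    using assms infinite_arbitrarily_large[of "UNIV :: 'i set" 3]
    by (auto simp: card_3_iff)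
  then interpret three_variables x y z by unfold_locales
  show ?thesis using leq_sound leq_complete by blast
qed

end
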